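(* Let $\overset{1}{\nabla}$ be a concircularly semi-symmetric metric connection on an $n$-dimensional pseudo-Riemannian manifold $(\mathcal M,g)$ with generator $\pi$ and associated vector field $P$. Then $(\mathcal M,g,\overset{1}{\nabla})$ is an Einstein type manifold of the fifth kind (i.e. $\overset{5}{Ric}=\frac{\overset{5}{r}}{n}g$) if and only if $\overset{g}{Ric}=\frac{1}{2n}\big(2\overset{g}{r}-(n-1)\pi(P)\big)g+\frac{n-1}{2}\pi\otimes\pi$ (so in particular the manifold is quasi-Einstein).
   Context: Let $(\mathcal M,g)$ be an $n$-dimensional pseudo-Riemannian manifold with Levi-Civita connection $\overset{g}{\nabla}$, let $P$ be a vector field and $\pi=g(\cdot,P)$ its associated 1-form. The semi-symmetric metric connection generated by $\pi$ is $\overset{1}{\nabla}_XY=\overset{g}{\nabla}_XY+\pi(Y)X-g(X,Y)P$; it satisfies $\overset{1}{\nabla}g=0$ and has torsion $\overset{1}{T}(X,Y)=\pi(Y)X-\pi(X)Y$. It is called a concircularly semi-symmetric metric connection if there is a smooth function $\omega$ on $\mathcal M$ such that $(\overset{g}{\nabla}_X\pi)(Y)-\pi(X)\pi(Y)=\omega\, g(X,Y)$ for all vector fields $X,Y$. Curvature tensors: $\overset{1}{R}(X,Y)Z=\overset{1}{\nabla}_X\overset{1}{\nabla}_YZ-\overset{1}{\nabla}_Y\overset{1}{\nabla}_XZ-\overset{1}{\nabla}_{[X,Y]}Z$ and, with $\mathfrak S_{XYZ}$ the cyclic sum over $X,Y,Z$, $\overset{5}{R}(X,Y)Z=\overset{1}{R}(X,Y)Z-\tfrac12(\overset{1}{\nabla}_X\overset{1}{T})(Y,Z)+\tfrac12(\overset{1}{\nabla}_Y\overset{1}{T})(X,Z)-\tfrac12\mathfrak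 S_{XYZ}\overset{1}{T}(\overset{1}{T}(X,Y),Z)+\tfrac12\overset{1}{T}(\overset{1}{T}(Z,X),Y)$. The Ricci tensors are $\overset{\theta}{Ric}(Y,Z)=\mathrm{tr}(X\mapsto \overset{\theta}{R}(X,Y)Z)$, and $\overset{g}{Ric}$ is the Ricci tensor of $\overset{g}{\nabla}$ defined the same way; $\overset{\theta}{r}$ and $\overset{g}{r}$ are their $g$-traces. A manifold is quasi-Einstein if $\overset{g}{Ric}=ag+b\,\pi\otimes\pi$ for scalar functions $a,b$. *)

theory Defs
  imports "HOL-Analysis.Analysis"
begin

text \<open>A chart of the n-dimensional manifold is an open set
U of real^'n (n = CARD('n)); all tensors are given by their components in the coordinate
frame d_1..d_n.\<close>

type_synonym 'n sfun = "(real^'n) \<Rightarrow> real"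

definition pd :: "'n::finite \<Rightarrow> 'n sfun \<Rightarrow> 'n sfun" where
  "pd i f x = frechet_derivative f (at x) (axis i 1)"

fun Ck :: "nat \<Rightarrow> (real^'n::finite) set \<Rightarrow> 'n sfun \<Rightarrow> bool" where
  "Ck 0 U f = continuous_on U f"
| "Ck (Suc k) U f = (f differentiable_on U \<and> (\<forall>i. Ck k U (pd i f)))"

definition smooth_on :: "(real^'n::finite) set \<Rightarrow> 'n sfun \<Rightarrow> bool" where
  "smooth_on U f \<longleftrightarrow> (\<forall>k. Ck k U f)"

definition gmat :: "('n::finite \<Rightarrow> 'n \<Rightarrow> 'n sfun) \<Rightarrow> real^'n \<Rightarrow> real^'n^'n" where
  "gmat g x = (\<chi> i j. g i j x)"

definition pseudo_riemannian :: "(real^'n::finite) set \<Rightarrow> ('n \<Rightarrow> 'n \<Rightarrow> 'n sfun) \<Rightarrow> bool" where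
  "pseudo_riemannian U g \<longleftrightarrow> open U \<and> (\<forall>i j. smooth_on U (g i j)) \<and>
     (\<forall>i j x. g i j x = g j i x) \<and> (\<forall>x\<in>U. det (gmat g x) \<noteq> 0)"

definition ginv :: "('n::finite \<Rightarrow> 'n \<Rightarrow> 'n sfun) \<Rightarrow> 'n \<Rightarrow> 'n \<Rightarrow> 'n sfun" where
  "ginv g i j x = matrix_inv (gmat g x) $ i $ j"

text \<open>Christoffel symbols of a connection: nabla_{d_i} d_j = sum_k Gam k i j d_k.
 Levi-Civita connection of g:\<close>
definition LC :: "('n::finite \<Rightarrow> 'n \<Rightarrow> 'n sfun) \<Rightarrow> 'n \<Rightarrow> 'n \<Rightarrow> 'n \<Rightarrow> 'n sfun" where
  "LC g k i j x = (1/2) * (\<Sum>l\<in>UNIV. ginv g k l x *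
       (pd i (g j l) x + pd j (g i l) x - pd l (g i j) x))"

definition oneform :: "('n::finite \<Rightarrow> 'n \<Rightarrow> 'n sfun) \<Rightarrow> ('n \<Rightarrow> 'n sfun) \<Rightarrow> 'n \<Rightarrow> 'n sfun" where
  "oneform g P i x = (\<Sum>j\<in>UNIV. g i j x * P j x)"

text \<open>semi-symmetric metric connection nabla^1:
 nabla1_X Y = nablag_X Y + pi(Y) X - g(X,Y) P\<close>
definition SSM :: "('n::finite \<Rightarrow> 'n \<Rightarrow> 'n sfun) \<Rightarrow> ('n \<Rightarrow> 'n sfun) \<Rightarrow> 'n \<Rightarrow> 'n \<Rightarrow> 'n \<Rightarrow> 'n sfun" where
  "SSM g P k i j x = LC g k i j x + (if k = i then oneform g P j x else 0) - g i j x * P k x"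

text \<open>Curvature of a connection: R(d_i,d_j)d_k = sum_l curv Gam l k i j d_l\<close>
definition curv :: "('n::finite \<Rightarrow> 'n \<Rightarrow> 'n \<Rightarrow> 'n sfun) \<Rightarrow> 'n \<Rightarrow> 'n \<Rightarrow> 'n \<Rightarrow> 'n \<Rightarrow> 'n sfun" where
  "curv Gam l k i j x = pd i (Gam l j k) x - pd j (Gam l i k) x +
     (\<Sum>m\<in>UNIV. Gam l i m x * Gam m j k x - Gam l j m x * Gam m i k x)"

text \<open>Ricci tensor of a curvature tensor: Ric(Y,Z) = tr(X |-> R(X,Y)Z)\<close>
definition ricci_of :: "('n::finite \<Rightarrow> 'n \<Rightarrow> 'n \<Rightarrow> 'n \<Rightarrow> 'n sfun) \<Rightarrow> 'n \<Rightarrow> 'n \<Rightarrow> 'n sfun" where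
  "ricci_of R j k x = (\<Sum>i\<in>UNIV. R i k i j x)"

definition scal_of :: "('n::finite \<Rightarrow> 'n \<Rightarrow> 'n sfun) \<Rightarrow> ('n \<Rightarrow> 'n \<Rightarrow> 'n sfun) \<Rightarrow> 'n sfun" where
  "scal_of g Ric x = (\<Sum>j\<in>UNIV. \<Sum>k\<in>UNIV. ginv g j k x * Ric j k x)"

definition Ric_g :: "('n::finite \<Rightarrow> 'n \<Rightarrow> 'n sfun) \<Rightarrow> 'n \<Rightarrow> 'n \<Rightarrow> 'n sfun" where
  "Ric_g g = ricci_of (curv (LC g))"

definition r_g :: "('n::finite \<Rightarrow> 'n \<Rightarrow> 'n sfun) \<Rightarrow> 'n sfun" where
  "r_g g = scal_of g (Ric_g g)"

text \<open>Torsion of nabla^1: T(d_i,d_j) = sum_k tors k i j d_k, T(X,Y) = pi(Y)X - pi(X)Y\<close>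
definition tors :: "('n::finite \<Rightarrow> 'n \<Rightarrow> 'n sfun) \<Rightarrow> ('n \<Rightarrow> 'n sfun) \<Rightarrow> 'n \<Rightarrow> 'n \<Rightarrow> 'n \<Rightarrow> 'n sfun" where
  "tors g P k i j x = (if k = i then oneform g P j x else 0) - (if k = j then oneform g P i x else 0)"

text \<open>(nabla^1_{d_i} T)(d_j,d_l) = sum_k covT i k j l d_k\<close>
definition covT :: "('n::finite \<Rightarrow> 'n \<Rightarrow> 'n sfun) \<Rightarrow> ('n \<Rightarrow> 'n sfun) \<Rightarrow> 'n \<Rightarrow> 'n \<Rightarrow> 'n \<Rightarrow> 'n \<Rightarrow> 'n sfun" where
  "covT g P i k j l x = pd i (tors g P k j l) x
     + (\<Sum>m\<in>UNIV. SSM g P k i m x * tors g P m j l x)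
     - (\<Sum>m\<in>UNIV. SSM g P m i j x * tors g P k m l x)
     - (\<Sum>m\<in>UNIV. SSM g P m i l x * tors g P k j m x)"

text \<open>T(T(d_a,d_b),d_c) component l\<close>
definition TT :: "('n::finite \<Rightarrow> 'n \<Rightarrow> 'n sfun) \<Rightarrow> ('n \<Rightarrow> 'n sfun) \<Rightarrow> 'n \<Rightarrow> 'n \<Rightarrow> 'n \<Rightarrow> 'n \<Rightarrow> 'n sfun" where
  "TT g P l a b c x = (\<Sum>m\<in>UNIV. tors g P m a b x * tors g P l m c x)"

text \<open>R^5(X,Y)Z with X = d_i, Y = d_j, Z = d_k; component l\<close>
definition R5 :: "('n::finite \<Rightarrow> 'n \<Rightarrow> 'n sfun) \<Rightarrow> ('n \<Rightarrow> 'n sfun) \<Rightarrow> 'n \<Rightarrow> 'n \<Rightarrow> 'n \<Rightarrow> 'n \<Rightarrow> 'n sfun" where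
  "R5 g P l k i j x = curv (SSM g P) l k i j x
     - (1/2) * covT g P i l j k x + (1/2) * covT g P j l i k x
     - (1/2) * (TT g P l i j k x + TT g P l j k i x + TT g P l k i j x)
     + (1/2) * TT g P l k i j x"

definition Ric5 :: "('n::finite \<Rightarrow> 'n \<Rightarrow> 'n sfun) \<Rightarrow> ('n \<Rightarrow> 'n sfun) \<Rightarrow> 'n \<Rightarrow> 'n \<Rightarrow> 'n sfun" where
  "Ric5 g P = ricci_of (R5 g P)"

definition r5 :: "('n::finite \<Rightarrow> 'n \<Rightarrow> 'n sfun) \<Rightarrow> ('n \<Rightarrow> 'n sfun) \<Rightarrow> 'n sfun" where
  "r5 g P = scal_of g (Ric5 g P)"

text \<open>concircular condition: (nablag_X pi)(Y) - pi(X)pi(Y) = omega g(X,Y)\<close>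
definition concircular_SSM :: "(real^'n::finite) set \<Rightarrow> ('n \<Rightarrow> 'n \<Rightarrow> 'n sfun) \<Rightarrow> ('n \<Rightarrow> 'n sfun) \<Rightarrow> 'n sfun \<Rightarrow> bool" where
  "concircular_SSM U g P \<omega> \<longleftrightarrow> (\<forall>x\<in>U. \<forall>i j.
      pd i (oneform g P j) x - (\<Sum>k\<in>UNIV. LC g k i j x * oneform g P k x)
      - oneform g P i x * oneform g P j x = \<omega> x * g i j x)"

definition einstein5 :: "(real^'n::finite) set \<Rightarrow> ('n \<Rightarrow> 'n \<Rightarrow> 'n sfun) \<Rightarrow> ('n \<Rightarrow> 'n sfun) \<Rightarrow> bool" where
  "einstein5 U g P \<longleftrightarrow> (\<forall>x\<in>U. \<forall>j k.
      Ric5 g P j k x = r5 g P x / real CARD('n) * g j k x)"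

end

theory Submission
  imports Defs
begin

text \<open>Metric compatibility of the Levi-Civita connection turns the concircular condition
  \<open>\<nabla>\<pi> = \<pi>\<otimes>\<pi> + \<omega> g\<close> into \<open>\<nabla>\<^sub>X P = \<omega> X + \<pi>(X) P\<close>. The semi-symmetric connection is
  \<open>\<nabla>\<^sup>g + K\<close> with \<open>K(X,Y) = \<pi>(Y) X - g(X,Y) P\<close>, so its curvature is that of \<open>\<nabla>\<^sup>g\<close> plus
  \<open>\<nabla>\<^sup>gK\<close>- and \<open>K K\<close>-terms, and both of these, as well as the torsion terms of \<open>R\<^sup>5\<close>, are
  built from \<open>g\<close>, \<open>\<pi>\<otimes>\<pi>\<close> and \<open>\<omega>\<close> alone. Contracting gives
  \<open>Ric\<^sup>5 = Ric\<^sup>g - (n-1)/2 (3\<omega> + \<pi>(P)) g - (n-1)/2 \<pi>\<otimes>\<pi>\<close>; the \<open>\<omega>\<close>-term is a multiple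
  of \<open>g\<close>, so it cancels in \<open>Ric\<^sup>5 - r\<^sup>5/n g\<close>, which leaves the stated condition on \<open>Ric\<^sup>g\<close>.\<close>

lemma sum_if_zero: "(\<Sum>m\<in>A. if Q then f m else (0::real)) = (if Q then (\<Sum>m\<in>A. f m) else 0)"
  by simp

lemma if_zero_mult: "(if Q then a else 0) * (b::real) = (if Q then a * b else 0)"
  by simp

lemma mult_if_zero: "(b::real) * (if Q then a else 0) = (if Q then b * a else 0)"
  by simp

lemmas index_simps = sum_if_zero if_zero_mult mult_if_zero
  ring_distribs sum.distrib sum_subtractf sum.delta sum.delta' sum_negf

text \<open>Coordinate formulas at a single point: \<open>curv_pt \<Gamma> d\<Gamma> l k i j\<close> is the \<open>l\<close>-th component of
  \<open>R(\<partial>\<^sub>i,\<partial>\<^sub>j)\<partial>\<^sub>k\<close>, where \<open>\<Gamma> l i j\<close> are the connection coefficients and \<open>d\<Gamma> i l j k\<close> stands for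
  \<open>\<partial>\<^sub>i\<Gamma>\<^sup>l\<^sub>j\<^sub>k\<close>; likewise \<open>cov_deriv_pt \<Gamma> A dA i l j k\<close> is \<open>(\<nabla>\<^sub>iA)\<^sup>l\<^sub>j\<^sub>k\<close> for a \<open>(1,2)\<close>-tensor \<open>A\<close>.\<close>

definition curv_pt :: "('n::finite \<Rightarrow> 'n \<Rightarrow> 'n \<Rightarrow> real) \<Rightarrow> ('n \<Rightarrow> 'n \<Rightarrow> 'n \<Rightarrow> 'n \<Rightarrow> real) \<Rightarrow>
    'n \<Rightarrow> 'n \<Rightarrow> 'n \<Rightarrow> 'n \<Rightarrow> real" where
  "curv_pt \<Gamma> d\<Gamma> l k i j = d\<Gamma> i l j k - d\<Gamma> j l i k + (\<Sum>m\<in>UNIV. \<Gamma> l i m * \<Gamma> m j k - \<Gamma> l j m * \<Gamma> m i k)"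

definition cov_deriv_pt :: "('n::finite \<Rightarrow> 'n \<Rightarrow> 'n \<Rightarrow> real) \<Rightarrow> ('n \<Rightarrow> 'n \<Rightarrow> 'n \<Rightarrow> real) \<Rightarrow>
    ('n \<Rightarrow> 'n \<Rightarrow> 'n \<Rightarrow> 'n \<Rightarrow> real) \<Rightarrow> 'n \<Rightarrow> 'n \<Rightarrow> 'n \<Rightarrow> 'n \<Rightarrow> real" where
  "cov_deriv_pt \<Gamma> A dA i l j k = dA i l j k + (\<Sum>m\<in>UNIV. \<Gamma> l i m * A m j k)
     - (\<Sum>m\<in>UNIV. \<Gamma> m i j * A l m k) - (\<Sum>m\<in>UNIV. \<Gamma> m i k * A l j m)"

lemma curv_pt_deform:
  assumes \<Gamma>_sym: "\<And>a b c. \<Gamma> a b c = \<Gamma> a c b"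
  shows "curv_pt (\<lambda>l i j. \<Gamma> l i j + K l i j) (\<lambda>i l j k. d\<Gamma> i l j k + dK i l j k) l k i j
    = curv_pt \<Gamma> d\<Gamma> l k i j + cov_deriv_pt \<Gamma> K dK i l j k - cov_deriv_pt \<Gamma> K dK j l i k
      + (\<Sum>m\<in>UNIV. K l i m * K m j k - K l j m * K m i k)"
  unfolding curv_pt_def cov_deriv_pt_def
  by (simp add: algebra_simps sum.distrib sum_subtractf \<Gamma>_sym[of _ i j])

text \<open>The data of the theorem at one point: \<open>G\<close> the metric, \<open>\<Gamma>\<close> its Christoffel symbols, \<open>p\<close> the
  components of \<open>P\<close> and \<open>w\<close> the value of \<open>\<omega>\<close>. The constants \<open>d\<pi>\<close>, \<open>dG\<close> and \<open>dp\<close> are the values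
  that metric compatibility and the concircular condition force on the partial derivatives of
  \<open>\<pi>\<close>, \<open>g\<close> and \<open>P\<close>; \<open>C = \<Gamma> + K\<close> is the semi-symmetric connection and \<open>T\<close> its torsion.\<close>

locale concircular_frame =
  fixes G :: "'n::finite \<Rightarrow> 'n \<Rightarrow> real"
    and \<Gamma> :: "'n \<Rightarrow> 'n \<Rightarrow> 'n \<Rightarrow> real"
    and p :: "'n \<Rightarrow> real"
    and w :: real
  assumes G_sym: "G a b = G b a"
    and \<Gamma>_sym: "\<Gamma> a b c = \<Gamma> a c b"
begin

definition \<pi> :: "'n \<Rightarrow> real" where
  "\<pi> a = (\<Sum>m\<in>UNIV. G a m * p m)"

definition \<pi>p :: real where
  "\<pi>p = (\<Sum>m\<in>UNIV. \<pi> m * p m)"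

definition K :: "'n \<Rightarrow> 'n \<Rightarrow> 'n \<Rightarrow> real" where
  "K l i j = (if l = i then \<pi> j else 0) - G i j * p l"

definition d\<pi> :: "'n \<Rightarrow> 'n \<Rightarrow> real" where
  "d\<pi> a b = (\<Sum>m\<in>UNIV. \<Gamma> m a b * \<pi> m) + \<pi> a * \<pi> b + w * G a b"

definition dG :: "'n \<Rightarrow> 'n \<Rightarrow> 'n \<Rightarrow> real" where
  "dG a b c = (\<Sum>m\<in>UNIV. \<Gamma> m a b * G m c + \<Gamma> m a c * G b m)"

definition dp :: "'n \<Rightarrow> 'n \<Rightarrow> real" where
  "dp a b = (if a = b then w else 0) + \<pi> a * p b - (\<Sum>m\<in>UNIV. \<Gamma> b a m * p m)"

definition dK :: "'n \<Rightarrow> 'n \<Rightarrow> 'n \<Rightarrow> 'n \<Rightarrow> real" where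
  "dK i l j k = (if l = j then d\<pi> i k else 0) - (dG i j k * p l + G j k * dp i l)"

lemma sum_G_p: "(\<Sum>m\<in>UNIV. G m a * p m) = \<pi> a" "(\<Sum>m\<in>UNIV. p m * G a m) = \<pi> a"
    "(\<Sum>m\<in>UNIV. p m * G m a) = \<pi> a"
  by (simp_all add: \<pi>_def G_sym[of a] mult.commute)

lemma cov_deriv_K:
  "cov_deriv_pt \<Gamma> K dK i l j k
     = (if l = j then \<pi> i * \<pi> k + w * G i k else 0) - G j k * ((if i = l then w else 0) + \<pi> i * p l)"
  unfolding cov_deriv_pt_def dK_def K_def d\<pi>_def dG_def dp_def
  by (simp add: index_simps algebra_simps sum_distrib_left)

lemma trace_K: "(\<Sum>i\<in>UNIV. K i i m) = (real CARD('n) - 1) * \<pi> m"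
  by (simp add: K_def index_simps sum_G_p algebra_simps)

lemma sum_K_K:
  "(\<Sum>m\<in>UNIV. K i j m * K m i k)
   = (if i = j then \<pi> i * \<pi> k - G i k * \<pi>p else 0) - G j i * p i * \<pi> k + p i * G i k * \<pi> j"
proof -
  have "(\<Sum>m\<in>UNIV. G j m * p i * (G i k * p m)) = p i * G i k * \<pi> j"
    by (simp add: \<pi>_def sum_distrib_left algebra_simps)
  then show ?thesis
    by (simp add: K_def index_simps \<pi>p_def sum_distrib_left algebra_simps)
qed

lemma dp_product_rule: "d\<pi> a j = (\<Sum>m\<in>UNIV. G j m * dp a m + dG a j m * p m)"
proof -
  have "(\<Sum>m\<in>UNIV. G j m * dp a m)
      = w * G a j + \<pi> a * \<pi> j - (\<Sum>m\<in>UNIV. \<Sum>c\<in>UNIV. G j m * \<Gamma> m a c * p c)"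
  proof -
    have "(\<Sum>m\<in>UNIV. G j m * (\<pi> a * p m)) = \<pi> a * \<pi> j"
      by (simp add: \<pi>_def sum_distrib_left algebra_simps)
    then show ?thesis
      by (simp add: dp_def index_simps sum_distrib_left G_sym[of j a] algebra_simps)
  qed
  moreover have "(\<Sum>m\<in>UNIV. dG a j m * p m)
      = (\<Sum>c\<in>UNIV. \<Gamma> c a j * \<pi> c) + (\<Sum>m\<in>UNIV. \<Sum>c\<in>UNIV. \<Gamma> c a m * G j c * p m)"
    by (simp add: dG_def \<pi>_def sum.distrib sum_distrib_left sum_distrib_right algebra_simps)
       (subst sum.swap, simp add: algebra_simps)
  moreover have "(\<Sum>m\<in>UNIV. \<Sum>c\<in>UNIV. \<Gamma> c a m * G j c * p m)
      = (\<Sum>m\<in>UNIV. \<Sum>c\<in>UNIV. G j m * \<Gamma> m a c * p c)"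
    by (subst sum.swap) (simp add: algebra_simps)
  ultimately show ?thesis
    by (simp add: d\<pi>_def sum.distrib algebra_simps)
qed

lemma dp_unique:
  assumes H_G: "\<And>a b. (\<Sum>m\<in>UNIV. H a m * G m b) = (if a = b then 1 else 0)"
    and D: "\<And>j. d\<pi> a j = (\<Sum>m\<in>UNIV. G j m * D m + dG a j m * p m)"
  shows "D b = dp a b"
proof -
  define v where "v m = D m - dp a m" for m
  have Gv: "(\<Sum>m\<in>UNIV. G j m * v m) = 0" for j
    using D[of j] dp_product_rule[of a j]
    by (simp add: v_def right_diff_distrib sum_subtractf sum.distrib)
  have "v b = (\<Sum>m\<in>UNIV. (\<Sum>j\<in>UNIV. H b j * G j m) * v m)"
    by (simp add: H_G index_simps)
  also have "\<dots> = (\<Sum>j\<in>UNIV. H b j * (\<Sum>m\<in>UNIV. G j m * v m))"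
    by (simp add: sum_distrib_left sum_distrib_right mult.assoc, subst sum.swap, simp)
  also have "\<dots> = 0"
    by (simp add: Gv)
  finally show ?thesis
    by (simp add: v_def)
qed

definition C :: "'n \<Rightarrow> 'n \<Rightarrow> 'n \<Rightarrow> real" where
  "C l i j = \<Gamma> l i j + K l i j"

lemma ricci_C:
  "(\<Sum>i\<in>UNIV. curv_pt C (\<lambda>i l j k. d\<Gamma> i l j k + dK i l j k) i k i j)
   = (\<Sum>i\<in>UNIV. curv_pt \<Gamma> d\<Gamma> i k i j) - (real CARD('n) - 1) * (2 * w + \<pi>p) * G j k"
proof -
  let ?n = "real CARD('n)"
  have "C = (\<lambda>l i j. \<Gamma> l i j + K l i j)"
    by (simp add: C_def fun_eq_iff)
  then have "(\<Sum>i\<in>UNIV. curv_pt C (\<lambda>i l j k. d\<Gamma> i l j k + dK i l j k) i k i j)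
      = (\<Sum>i\<in>UNIV. curv_pt \<Gamma> d\<Gamma> i k i j)
        + (\<Sum>i\<in>UNIV. cov_deriv_pt \<Gamma> K dK i i j k) - (\<Sum>i\<in>UNIV. cov_deriv_pt \<Gamma> K dK j i i k)
        + (\<Sum>i\<in>UNIV. \<Sum>m\<in>UNIV. K i i m * K m j k) - (\<Sum>i\<in>UNIV. \<Sum>m\<in>UNIV. K i j m * K m i k)"
    by (simp add: curv_pt_deform[OF \<Gamma>_sym] sum.distrib sum_subtractf)
  moreover have "(\<Sum>i\<in>UNIV. cov_deriv_pt \<Gamma> K dK i i j k)
      = \<pi> j * \<pi> k + w * G j k - G j k * (?n * w + \<pi>p)"
    by (simp add: cov_deriv_K index_simps \<pi>p_def sum_distrib_left)
  moreover have "(\<Sum>i\<in>UNIV. cov_deriv_pt \<Gamma> K dK j i i k)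
      = ?n * (\<pi> j * \<pi> k + w * G j k) - w * G j k - \<pi> j * \<pi> k"
    by (simp add: cov_deriv_K index_simps algebra_simps)
      (simp add: mult.assoc[symmetric] sum_distrib_right[symmetric] sum_G_p)
  moreover have "(\<Sum>i\<in>UNIV. \<Sum>m\<in>UNIV. K i i m * K m j k) = (?n - 1) * (\<pi> j * \<pi> k - G j k * \<pi>p)"
    by (subst sum.swap) (simp add: sum_distrib_right[symmetric] trace_K,
      simp add: K_def index_simps \<pi>p_def sum_distrib_left algebra_simps)
  moreover have "(\<Sum>i\<in>UNIV. \<Sum>m\<in>UNIV. K i j m * K m i k) = \<pi> j * \<pi> k - G j k * \<pi>p"
    by (simp add: sum_K_K sum.distrib sum_subtractf sum_distrib_right[symmetric] \<pi>_def[symmetric]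
        sum_G_p index_simps)
  ultimately show ?thesis
    by (simp add: algebra_simps)
qed

definition T :: "'n \<Rightarrow> 'n \<Rightarrow> 'n \<Rightarrow> real" where
  "T k i j = (if k = i then \<pi> j else 0) - (if k = j then \<pi> i else 0)"

definition dT :: "'n \<Rightarrow> 'n \<Rightarrow> 'n \<Rightarrow> 'n \<Rightarrow> real" where
  "dT a k i j = (if k = i then d\<pi> a j else 0) - (if k = j then d\<pi> a i else 0)"

definition TT :: "'n \<Rightarrow> 'n \<Rightarrow> 'n \<Rightarrow> 'n \<Rightarrow> real" where
  "TT l a b c = (\<Sum>m\<in>UNIV. T m a b * T l m c)"

lemma d\<pi>_sym: "d\<pi> a b = d\<pi> b a"
  by (simp add: d\<pi>_def \<Gamma>_sym[of _ a b] G_sym[of a b] mult.commute)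

lemma cov_deriv_T_contract_deriv: "(\<Sum>i\<in>UNIV. cov_deriv_pt C T dT i i j k) = 0"
proof -
  have "(\<Sum>i\<in>UNIV. cov_deriv_pt C T dT i i j k)
      = d\<pi> j k - d\<pi> k j + (\<Sum>m\<in>UNIV. (C m k j - C m j k) * \<pi> m)"
    by (simp add: cov_deriv_pt_def T_def dT_def index_simps algebra_simps)
  moreover have "(\<Sum>m\<in>UNIV. (C m k j - C m j k) * \<pi> m) = 0"
    by (simp add: C_def K_def \<Gamma>_sym[of _ k j] G_sym[of k j] index_simps algebra_simps)
  ultimately show ?thesis
    by (simp add: d\<pi>_sym[of j k])
qed

lemma cov_deriv_T_contract_lower:
  "(\<Sum>i\<in>UNIV. cov_deriv_pt C T dT j i i k) = (real CARD('n) - 1) * (w + \<pi>p) * G j k"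
proof -
  have "(\<Sum>i\<in>UNIV. cov_deriv_pt C T dT j i i k)
      = (real CARD('n) - 1) * (d\<pi> j k - (\<Sum>m\<in>UNIV. C m j k * \<pi> m))"
    by (simp add: cov_deriv_pt_def T_def dT_def index_simps algebra_simps)
  also have "(\<Sum>m\<in>UNIV. C m j k * \<pi> m) = (\<Sum>m\<in>UNIV. \<Gamma> m j k * \<pi> m) + \<pi> j * \<pi> k - G j k * \<pi>p"
    by (simp add: C_def K_def \<pi>p_def index_simps sum_distrib_left algebra_simps)
  finally show ?thesis
    by (simp add: d\<pi>_def algebra_simps)
qed

lemma TT_cyclic: "TT l i j k + TT l j k i + TT l k i j = 0"
  by (simp add: TT_def T_def index_simps algebra_simps)

lemma trace_TT: "(\<Sum>i\<in>UNIV. TT i k i j) = (1 - real CARD('n)) * \<pi> j * \<pi> k"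
  by (simp add: TT_def T_def index_simps algebra_simps)

definition R5_pt :: "('n \<Rightarrow> 'n \<Rightarrow> 'n \<Rightarrow> 'n \<Rightarrow> real) \<Rightarrow> 'n \<Rightarrow> 'n \<Rightarrow> 'n \<Rightarrow> 'n \<Rightarrow> real" where
  "R5_pt d\<Gamma> l k i j = curv_pt C (\<lambda>i l j k. d\<Gamma> i l j k + dK i l j k) l k i j
     - (1/2) * cov_deriv_pt C T dT i l j k + (1/2) * cov_deriv_pt C T dT j l i k
     - (1/2) * (TT l i j k + TT l j k i + TT l k i j) + (1/2) * TT l k i j"

lemma ricci_R5_pt:
  "(\<Sum>i\<in>UNIV. R5_pt d\<Gamma> i k i j) = (\<Sum>i\<in>UNIV. curv_pt \<Gamma> d\<Gamma> i k i j)
     - (real CARD('n) - 1) / 2 * (3 * w + \<pi>p) * G j k - (real CARD('n) - 1) / 2 * (\<pi> j * \<pi> k)"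
proof -
  have "(\<Sum>i\<in>UNIV. R5_pt d\<Gamma> i k i j)
      = (\<Sum>i\<in>UNIV. curv_pt C (\<lambda>i l j k. d\<Gamma> i l j k + dK i l j k) i k i j)
        - (1/2) * (\<Sum>i\<in>UNIV. cov_deriv_pt C T dT i i j k)
        + (1/2) * (\<Sum>i\<in>UNIV. cov_deriv_pt C T dT j i i k) + (1/2) * (\<Sum>i\<in>UNIV. TT i k i j)"
    by (simp add: R5_pt_def TT_cyclic sum.distrib sum_subtractf sum_distrib_left)
  then show ?thesis
    by (simp add: ricci_C cov_deriv_T_contract_deriv cov_deriv_T_contract_lower trace_TT field_simps)
qed

end

lemma pd_has_derivative: "(f has_derivative f') (at x) \<Longrightarrow> pd i f x = f' (axis i 1)"
  unfolding pd_def by (metis frechet_derivative_at)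

lemma pd_add:
  "f differentiable (at x) \<Longrightarrow> h differentiable (at x) \<Longrightarrow> pd i (\<lambda>y. f y + h y) x = pd i f x + pd i h x"
  using pd_has_derivative[OF has_derivative_add[OF frechet_derivative_works[THEN iffD1]
        frechet_derivative_works[THEN iffD1]]] by (simp add: pd_def)

lemma pd_diff:
  "f differentiable (at x) \<Longrightarrow> h differentiable (at x) \<Longrightarrow> pd i (\<lambda>y. f y - h y) x = pd i f x - pd i h x"
  using pd_has_derivative[OF has_derivative_diff[OF frechet_derivative_works[THEN iffD1]
        frechet_derivative_works[THEN iffD1]]] by (simp add: pd_def)

lemma pd_mult:
  "f differentiable (at x) \<Longrightarrow> h differentiable (at x) \<Longrightarrow>
   pd i (\<lambda>y. f y * h y) x = f x * pd i h x + pd i f x * h x"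
  using pd_has_derivative[OF has_derivative_mult[OF frechet_derivative_works[THEN iffD1]
        frechet_derivative_works[THEN iffD1]]] by (simp add: pd_def)

lemma pd_sum:
  assumes "\<And>m. m \<in> S \<Longrightarrow> f m differentiable (at x)"
  shows "pd i (\<lambda>y. \<Sum>m\<in>S. f m y) x = (\<Sum>m\<in>S. pd i (f m) x)"
proof -
  have "((\<lambda>y. \<Sum>m\<in>S. f m y) has_derivative (\<lambda>v. \<Sum>m\<in>S. frechet_derivative (f m) (at x) v)) (at x)"
    using assms by (intro has_derivative_sum) (simp add: frechet_derivative_works)
  from pd_has_derivative[OF this] show ?thesis
    by (simp add: pd_def)
qed

lemma pd_const: "pd i (\<lambda>y. c) x = 0"
  by (simp add: pd_has_derivative[where f' = "\<lambda>_. 0"])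

lemma pd_minus: "f differentiable (at x) \<Longrightarrow> pd i (\<lambda>y. - f y) x = - pd i f x"
  using pd_diff[of "\<lambda>y. 0" x f i] by (simp add: pd_const)

lemma smooth_on_imp_differentiable: "smooth_on U f \<Longrightarrow> open U \<Longrightarrow> x \<in> U \<Longrightarrow> f differentiable (at x)"
  unfolding smooth_on_def by (metis Ck.simps(2) differentiable_on_def at_within_open)

lemma smooth_on_pd: "smooth_on U f \<Longrightarrow> smooth_on U (pd i f)"
  unfolding smooth_on_def by (metis Ck.simps(2))

lemma differentiable_prod:
  fixes f :: "'i \<Rightarrow> 'a::real_normed_vector \<Rightarrow> real"
  shows "(\<And>i. i \<in> I \<Longrightarrow> f i differentiable (at x)) \<Longrightarrow> (\<lambda>y. \<Prod>i\<in>I. f i y) differentiable (at x)"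
  by (induction I rule: infinite_finite_induct) auto

lemma differentiable_det:
  fixes A :: "'n::finite \<Rightarrow> 'n \<Rightarrow> real^'m::finite \<Rightarrow> real"
  assumes "\<And>i j. A i j differentiable (at x)"
  shows "(\<lambda>y. det (\<chi> i j. A i j y)) differentiable (at x)"
  unfolding det_def using assms by (auto intro!: differentiable_sum differentiable_mult differentiable_prod)

lemma pseudo_riemannian_differentiable:
  "pseudo_riemannian U g \<Longrightarrow> x \<in> U \<Longrightarrow> g i j differentiable (at x)"
  unfolding pseudo_riemannian_def by (blast intro: smooth_on_imp_differentiable)

lemma pseudo_riemannian_pd_differentiable:
  "pseudo_riemannian U g \<Longrightarrow> x \<in> U \<Longrightarrow> pd a (g i j) differentiable (at x)"
  unfolding pseudo_riemannian_def by (blast intro: smooth_on_imp_differentiable smooth_on_pd)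

lemma pseudo_riemannian_sym: "pseudo_riemannian U g \<Longrightarrow> g i j = g j i"
  unfolding pseudo_riemannian_def by auto

lemma gmat_inverse:
  assumes "pseudo_riemannian U g" "x \<in> U"
  shows "gmat g x ** matrix_inv (gmat g x) = mat 1" "matrix_inv (gmat g x) ** gmat g x = mat 1"
proof -
  have "invertible (gmat g x)"
    using assms invertible_det_nz unfolding pseudo_riemannian_def by blast
  then show "gmat g x ** matrix_inv (gmat g x) = mat 1" "matrix_inv (gmat g x) ** gmat g x = mat 1"
    unfolding invertible_def matrix_inv_def by (metis (mono_tags, lifting) someI_ex)+
qed

lemma ginv_right:
  "pseudo_riemannian U g \<Longrightarrow> x \<in> U \<Longrightarrow> (\<Sum>m\<in>UNIV. g a m x * ginv g m b x) = (if a = b then 1 else 0)"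
  using gmat_inverse(1)[THEN arg_cong[where f = "\<lambda>M. M $ a $ b"]]
  by (simp add: matrix_matrix_mult_def gmat_def ginv_def mat_def)

lemma ginv_left:
  "pseudo_riemannian U g \<Longrightarrow> x \<in> U \<Longrightarrow> (\<Sum>m\<in>UNIV. ginv g a m x * g m b x) = (if a = b then 1 else 0)"
  using gmat_inverse(2)[THEN arg_cong[where f = "\<lambda>M. M $ a $ b"]]
  by (simp add: matrix_matrix_mult_def gmat_def ginv_def mat_def)

lemma ginv_cramer:
  assumes "pseudo_riemannian U g" "x \<in> U"
  shows "ginv g k l x = det (\<chi> a b. if b = k then (if a = l then 1 else 0) else g a b x) / det (gmat g x)"
proof -
  let ?A = "gmat g x" and ?e = "axis l 1 :: real^_"
  have "det ?A \<noteq> 0"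
    using assms unfolding pseudo_riemannian_def by blast
  moreover have "?A *v (matrix_inv ?A *v ?e) = ?e"
    using gmat_inverse[OF assms] by (simp add: matrix_vector_mul_assoc)
  ultimately have "matrix_inv ?A *v ?e = (\<chi> k. det (\<chi> i j. if j = k then ?e $ i else ?A $ i $ j) / det ?A)"
    using cramer by blast
  then show ?thesis
    by (simp add: vec_eq_iff matrix_vector_mult_def axis_def ginv_def gmat_def if_distrib cong: if_cong)
qed

lemma differentiable_ginv:
  assumes pr: "pseudo_riemannian U g" and x: "x \<in> U"
  shows "ginv g k l differentiable (at x)"
proof -
  define F where "F y = det (\<chi> a b. if b = k then (if a = l then 1 else 0) else g a b y) / det (gmat g y)" for y
  have entries: "(\<lambda>y. if b = k then (if a = l then 1 else 0) else g a b y) differentiable (at x)" for a b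
    by (cases "b = k") (simp_all add: pseudo_riemannian_differentiable[OF pr x])
  have "F differentiable (at x)"
    using pr x unfolding F_def gmat_def pseudo_riemannian_def
    by (intro differentiable_divide differentiable_det entries pseudo_riemannian_differentiable[OF pr x]) auto
  moreover have "F y = ginv g k l y" if "y \<in> U" for y
    using ginv_cramer[OF pr that] by (simp add: F_def)
  ultimately show ?thesis
    using pr x unfolding differentiable_def pseudo_riemannian_def
    by (metis has_derivative_transform_within_open)
qed

lemma LC_sym: "pseudo_riemannian U g \<Longrightarrow> LC g k i j x = LC g k j i x"
  unfolding LC_def by (simp add: pseudo_riemannian_sym[of U g] algebra_simps)

lemma differentiable_LC:
  "pseudo_riemannian U g \<Longrightarrow> x \<in> U \<Longrightarrow> LC g k i j differentiable (at x)"
  unfolding LC_def[abs_def]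
  by (intro differentiable_mult differentiable_const differentiable_sum differentiable_add
      differentiable_diff differentiable_ginv ballI pseudo_riemannian_pd_differentiable) auto

lemma smooth_vector_field_differentiable:
  "pseudo_riemannian U g \<Longrightarrow> \<forall>i. smooth_on U (P i) \<Longrightarrow> x \<in> U \<Longrightarrow> P i differentiable (at x)"
  unfolding pseudo_riemannian_def by (blast intro: smooth_on_imp_differentiable)

lemma differentiable_oneform:
  assumes "pseudo_riemannian U g" "\<forall>i. smooth_on U (P i)" "x \<in> U"
  shows "oneform g P j differentiable (at x)"
proof -
  have "g j m differentiable (at x)" "P m differentiable (at x)" for m
    using pseudo_riemannian_differentiable[OF assms(1,3)] smooth_vector_field_differentiable[OF assms] by blast+
  then show ?thesis
    unfolding oneform_def[abs_def] by (auto intro!: differentiable_sum differentiable_mult)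
qed

lemma LC_lower:
  assumes pr: "pseudo_riemannian U g" and x: "x \<in> U"
  shows "(\<Sum>m\<in>UNIV. LC g m a b x * g m c x)
    = (1/2) * (pd a (g b c) x + pd b (g a c) x - pd c (g a b) x)"
proof -
  let ?E = "\<lambda>l. pd a (g b l) x + pd b (g a l) x - pd l (g a b) x"
  have "(\<Sum>m\<in>UNIV. LC g m a b x * g m c x) = (1/2) * (\<Sum>m\<in>UNIV. \<Sum>l\<in>UNIV. g c m x * ginv g m l x * ?E l)"
    by (simp add: LC_def sum_distrib_left sum_distrib_right pseudo_riemannian_sym[OF pr, of _ c] mult_ac)
  also have "\<dots> = (1/2) * (\<Sum>l\<in>UNIV. (\<Sum>m\<in>UNIV. g c m x * ginv g m l x) * ?E l)"
    by (subst sum.swap) (simp add: sum_distrib_right)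
  also have "\<dots> = (1/2) * ?E c"
    by (simp add: ginv_right[OF pr x] index_simps)
  finally show ?thesis .
qed

lemma pd_metric:
  assumes pr: "pseudo_riemannian U g" and x: "x \<in> U"
  shows "pd a (g b c) x = (\<Sum>m\<in>UNIV. LC g m a b x * g m c x + LC g m a c x * g b m x)"
proof -
  have "(\<Sum>m\<in>UNIV. LC g m a c x * g b m x) = (\<Sum>m\<in>UNIV. LC g m a c x * g m b x)"
    using pseudo_riemannian_sym[OF pr, of b] by simp
  then show ?thesis
    using LC_lower[OF pr x, of a b c] LC_lower[OF pr x, of a c b] pseudo_riemannian_sym[OF pr, of c b]
      pseudo_riemannian_sym[OF pr, of c a] pseudo_riemannian_sym[OF pr, of b a]
    by (simp add: sum.distrib)
qed

lemma pd_oneform: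
  assumes pr: "pseudo_riemannian U g" and sP: "\<forall>i. smooth_on U (P i)" and x: "x \<in> U"
  shows "pd a (oneform g P j) x = (\<Sum>m\<in>UNIV. g j m x * pd a (P m) x + pd a (g j m) x * P m x)"
proof -
  have "\<And>i j. g i j differentiable (at x)" "\<And>i. P i differentiable (at x)"
    using pseudo_riemannian_differentiable[OF pr x] smooth_vector_field_differentiable[OF pr sP x] by blast+
  then show ?thesis
    unfolding oneform_def[abs_def] by (simp add: pd_sum pd_mult)
qed

lemma pd_oneform_concircular:
  "concircular_SSM U g P \<omega> \<Longrightarrow> x \<in> U \<Longrightarrow> pd a (oneform g P b) x
     = (\<Sum>m\<in>UNIV. LC g m a b x * oneform g P m x) + oneform g P a x * oneform g P b x + \<omega> x * g a b x"
  unfolding concircular_SSM_def by (auto simp: algebra_simps)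

lemma concircular_frame_at:
  "pseudo_riemannian U g \<Longrightarrow> concircular_frame (\<lambda>a b. g a b x) (\<lambda>k i j. LC g k i j x)"
  by unfold_locales (auto simp: pseudo_riemannian_sym LC_sym)

lemma trace_ginv_metric:
  fixes g :: "'n::finite \<Rightarrow> 'n \<Rightarrow> 'n sfun"
  assumes "pseudo_riemannian U g" "x \<in> U"
  shows "(\<Sum>j\<in>UNIV. \<Sum>k\<in>UNIV. ginv g j k x * g j k x) = real CARD('n)"
proof -
  have "(\<Sum>k\<in>UNIV. ginv g j k x * g j k x) = 1" for j
    using ginv_left[OF assms, of j j] by (simp add: pseudo_riemannian_sym[OF assms(1), of j])
  then show ?thesis
    by simp
qed

lemma trace_ginv_oneform:
  assumes pr: "pseudo_riemannian U g" and x: "x \<in> U"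
  shows "(\<Sum>j\<in>UNIV. \<Sum>k\<in>UNIV. ginv g j k x * (oneform g P j x * oneform g P k x))
    = (\<Sum>i\<in>UNIV. oneform g P i x * P i x)"
proof -
  have raise: "(\<Sum>k\<in>UNIV. ginv g j k x * oneform g P k x) = P j x" for j
  proof -
    have "(\<Sum>k\<in>UNIV. ginv g j k x * oneform g P k x) = (\<Sum>m\<in>UNIV. (\<Sum>k\<in>UNIV. ginv g j k x * g k m x) * P m x)"
      unfolding oneform_def sum_distrib_left sum_distrib_right by (subst sum.swap) (simp add: mult.assoc)
    then show ?thesis
      by (simp add: ginv_left[OF pr x] index_simps)
  qed
  show ?thesis
    by (simp add: sum_distrib_left[symmetric] mult.left_commute[of "ginv g _ _ x"] raise mult.commute)
qed

context
  fixes U :: "(real^'n::finite) set" and g :: "'n \<Rightarrow> 'n \<Rightarrow> 'n sfun" and P :: "'n \<Rightarrow> 'n sfun"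
    and \<omega> :: "'n sfun"
  assumes pr: "pseudo_riemannian U g"
    and sP: "\<forall>i. smooth_on U (P i)"
    and cc: "concircular_SSM U g P \<omega>"
begin

lemma pd_P_concircular:
  assumes x: "x \<in> U"
  shows "pd a (P b) x
    = (if a = b then \<omega> x else 0) + oneform g P a x * P b x - (\<Sum>m\<in>UNIV. LC g b a m x * P m x)"
proof -
  interpret F: concircular_frame "\<lambda>a b. g a b x" "\<lambda>k i j. LC g k i j x" "\<lambda>a. P a x" "\<omega> x"
    by (rule concircular_frame_at[OF pr])
  have \<pi>: "F.\<pi> = (\<lambda>a. oneform g P a x)"
    by (simp add: fun_eq_iff F.\<pi>_def oneform_def)
  have "pd a (P b) x = F.dp a b"
  proof (rule F.dp_unique[where H = "\<lambda>a b. ginv g a b x" and D = "\<lambda>m. pd a (P m) x"])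
    show "\<And>a b. (\<Sum>m\<in>UNIV. ginv g a m x * g m b x) = (if a = b then 1 else 0)"
      by (rule ginv_left[OF pr x])
    show "F.d\<pi> a j = (\<Sum>m\<in>UNIV. g j m x * pd a (P m) x + F.dG a j m * P m x)" for j
      using pd_oneform[OF pr sP x, of a j] pd_oneform_concircular[OF cc x, of a j]
      by (simp add: F.d\<pi>_def F.dG_def \<pi> pd_metric[OF pr x])
  qed
  then show ?thesis
    by (simp add: F.dp_def \<pi>)
qed

lemma pd_SSM:
  assumes x: "x \<in> U"
  shows "pd i (SSM g P l j k) x = pd i (LC g l j k) x + (if l = j then pd i (oneform g P k) x else 0)
     - (pd i (g j k) x * P l x + g j k x * pd i (P l) x)"
proof -
  have "LC g l j k differentiable (at x)" "oneform g P k differentiable (at x)"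
    "g j k differentiable (at x)" "P l differentiable (at x)"
    using differentiable_LC[OF pr x] differentiable_oneform[OF pr sP x]
      pseudo_riemannian_differentiable[OF pr x] smooth_vector_field_differentiable[OF pr sP x] by blast+
  then show ?thesis
    by (cases "l = j") (simp_all add: SSM_def[abs_def] pd_add pd_diff pd_mult algebra_simps)
qed

lemma pd_tors:
  assumes x: "x \<in> U"
  shows "pd a (tors g P k i j) x
    = (if k = i then pd a (oneform g P j) x else 0) - (if k = j then pd a (oneform g P i) x else 0)"
  using differentiable_oneform[OF pr sP x]
  by (cases "k = i"; cases "k = j") (simp_all add: tors_def[abs_def] pd_diff pd_minus pd_const)

lemma Ric5_concircular:
  assumes x: "x \<in> U"
  shows "Ric5 g P j k x = Ric_g g j k x
    - (real CARD('n) - 1) / 2 * (3 * \<omega> x + (\<Sum>i\<in>UNIV. oneform g P i x * P i x)) * g j k x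
    - (real CARD('n) - 1) / 2 * (oneform g P j x * oneform g P k x)"
proof -
  interpret F: concircular_frame "\<lambda>a b. g a b x" "\<lambda>k i j. LC g k i j x" "\<lambda>a. P a x" "\<omega> x"
    by (rule concircular_frame_at[OF pr])
  define d\<Gamma> where "d\<Gamma> i l j k = pd i (LC g l j k) x" for i l j k
  have \<pi>: "F.\<pi> = (\<lambda>a. oneform g P a x)"
    by (simp add: fun_eq_iff F.\<pi>_def oneform_def)
  have d\<pi>: "pd a (oneform g P b) x = F.d\<pi> a b" for a b
    by (simp add: pd_oneform_concircular[OF cc x] F.d\<pi>_def \<pi>)
  have dK: "pd i (SSM g P l j k) x = d\<Gamma> i l j k + F.dK i l j k" for i l j k
    by (simp add: pd_SSM[OF x] d\<Gamma>_def F.dK_def d\<pi> pd_metric[OF pr x] F.dG_def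
        pd_P_concircular[OF x] F.dp_def \<pi>)
  have C: "SSM g P l i j x = F.C l i j" for l i j
    by (simp add: SSM_def F.C_def F.K_def \<pi>)
  have T: "tors g P k i j x = F.T k i j" and dT: "pd a (tors g P k i j) x = F.dT a k i j" for a k i j
    by (simp_all add: tors_def F.T_def pd_tors[OF x] F.dT_def d\<pi> \<pi>)
  have "R5 g P l k i j x = F.R5_pt d\<Gamma> l k i j" for l k i j
    unfolding R5_def F.R5_pt_def curv_def curv_pt_def covT_def cov_deriv_pt_def TT_def F.TT_def
    by (simp add: C dK T dT)
  moreover have "curv (LC g) l k i j x = curv_pt (\<lambda>k i j. LC g k i j x) d\<Gamma> l k i j" for l k i j
    by (simp add: curv_def curv_pt_def d\<Gamma>_def)
  ultimately show ?thesis
    by (simp add: Ric5_def Ric_g_def ricci_of_def F.ricci_R5_pt F.\<pi>p_def \<pi>)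
qed

lemma r5_concircular:
  assumes x: "x \<in> U"
  shows "r5 g P x = r_g g x
    - real CARD('n) * (real CARD('n) - 1) / 2 * (3 * \<omega> x + (\<Sum>i\<in>UNIV. oneform g P i x * P i x))
    - (real CARD('n) - 1) / 2 * (\<Sum>i\<in>UNIV. oneform g P i x * P i x)"
proof -
  let ?c = "(real CARD('n) - 1) / 2 * (3 * \<omega> x + (\<Sum>i\<in>UNIV. oneform g P i x * P i x))"
  let ?d = "(real CARD('n) - 1) / 2"
  have "r5 g P x = r_g g x - ?c * (\<Sum>j\<in>UNIV. \<Sum>k\<in>UNIV. ginv g j k x * g j k x)
      - ?d * (\<Sum>j\<in>UNIV. \<Sum>k\<in>UNIV. ginv g j k x * (oneform g P j x * oneform g P k x))"
    unfolding r5_def r_g_def scal_of_def Ric5_concircular[OF x]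
    by (simp add: right_diff_distrib sum_subtractf sum_distrib_left mult.left_commute)
  then show ?thesis
    unfolding trace_ginv_metric[OF pr x] trace_ginv_oneform[OF pr x] by (simp add: field_simps)
qed

end

theorem mainTheorem8:
  fixes U :: "(real^'n::finite) set"
    and g :: "'n \<Rightarrow> 'n \<Rightarrow> (real^'n) \<Rightarrow> real"
    and P :: "'n \<Rightarrow> (real^'n) \<Rightarrow> real"
    and \<omega> :: "(real^'n) \<Rightarrow> real"
  assumes "pseudo_riemannian U g"
    and "\<forall>i. smooth_on U (P i)"
    and "smooth_on U \<omega>"
    and "concircular_SSM U g P \<omega>"
  shows "einstein5 U g P \<longleftrightarrow>
    (\<forall>x\<in>U. \<forall>j k. Ric_g g j k x =
        1 / (2 * real CARD('n)) * (2 * r_g g x - (real CARD('n) - 1) * (\<Sum>i\<in>UNIV. oneform g P i x * P i x)) * g j k x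
        + (real CARD('n) - 1) / 2 * (oneform g P j x * oneform g P k x))"
proof -
  let ?n = "real CARD('n)"
  define s where "s x = (\<Sum>i\<in>UNIV. oneform g P i x * P i x)" for x
  define c where "c x = (?n - 1) / 2 * (3 * \<omega> x + s x)" for x
  have "Ric5 g P j k x = r5 g P x / ?n * g j k x \<longleftrightarrow>
      Ric_g g j k x = 1 / (2 * ?n) * (2 * r_g g x - (?n - 1) * s x) * g j k x
        + (?n - 1) / 2 * (oneform g P j x * oneform g P k x)" if x: "x \<in> U" for x j k
  proof -
    have Ric5: "Ric5 g P j k x
        = Ric_g g j k x - c x * g j k x - (?n - 1) / 2 * (oneform g P j x * oneform g P k x)"
      using Ric5_concircular[OF assms(1,2,4) x] by (simp add: s_def c_def)
    have r5: "r5 g P x / ?n = 1 / (2 * ?n) * (2 * r_g g x - (?n - 1) * s x) - c x"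
      using r5_concircular[OF assms(1,2,4) x] by (simp add: s_def c_def field_simps)
    show ?thesis
      unfolding Ric5 r5 left_diff_distrib by linarith
  qed
  then show ?thesis
    unfolding einstein5_def s_def[symmetric] by blast
qed

end
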